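(* For every integer $n\ge 3$, $$Kf(M_n)=\frac{n^{3}-n}{6}+\frac{n^{2}}{\sqrt{3}}\cdot\frac{p^{n}-q^{n}}{p^{n}+q^{n}+2}.$$
   Context: For an integer $n\ge 3$, the Möbius polyomino network $M_n$ is the graph with vertex set $\{1,\dots,n\}\cup\{1',\dots,n'\}$ whose edges are $\{i,i+1\}$ and $\{i',(i+1)'\}$ for $1\le i\le n-1$, $\{i,i'\}$ for $1\le i\le n$, and the two edges $\{1,n'\}$ and $\{1',n\}$. It has $2n$ vertices and $3n$ edges, and every vertex has degree $3$. $p=2+\sqrt3$, $q=2-\sqrt3$. The Kirchhoff index of a connected graph $G$ is $Kf(G)=\sum_{i<j}r_{ij}$, where $r_{ij}$ is the resistance distance between vertices $i$ and $j$; equivalently $Kf(G)=N\sum_{k=2}^{N}1/\mu_k$, where $N=|V(G)|$ and $0=\mu_1<\mu_2\le\dots\le\mu_N$ are the Laplacian eigenvalues of $G$. *)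

theory Defs
  imports Complex_Main
begin

text \<open>A finite simple graph is given by a finite vertex set V and a symmetric,
irreflexive adjacency relation A on V.\<close>

definition laplacian_app :: "'a set \<Rightarrow> ('a \<Rightarrow> 'a \<Rightarrow> bool) \<Rightarrow> ('a \<Rightarrow> real) \<Rightarrow> 'a \<Rightarrow> real" where
  "laplacian_app V A x u = (\<Sum>v\<in>{v\<in>V. A u v}. x u - x v)"

text \<open>Resistance distance between i and j: inject a unit current at i, extract it at j
(i.e. solve L x = e_i - e_j); r_ij is the resulting potential difference x_i - x_j.
For a connected graph this is well defined (equals (e_i-e_j)^T L^+ (e_i-e_j)).\<close>
definition resistance :: "'a set \<Rightarrow> ('a \<Rightarrow> 'a \<Rightarrow> bool) \<Rightarrow> 'a \<Rightarrow> 'a \<Rightarrow> real" where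
  "resistance V A i j =
     (THE r. \<exists>x. (\<forall>u\<in>V. laplacian_app V A x u =
                      (if u = i then 1 else 0) - (if u = j then 1 else 0)) \<and> r = x i - x j)"

text \<open>Kirchhoff index: sum of r_ij over unordered pairs {i,j}, i \<noteq> j
(written as half the ordered double sum; r_ii = 0).\<close>
definition kirchhoff :: "'a set \<Rightarrow> ('a \<Rightarrow> 'a \<Rightarrow> bool) \<Rightarrow> real" where
  "kirchhoff V A = (\<Sum>i\<in>V. \<Sum>j\<in>V. resistance V A i j) / 2"

text \<open>Moebius polyomino network M_n: vertex (i, False) is i, vertex (i, True) is i'.\<close>
definition mob_V :: "nat \<Rightarrow> (nat \<times> bool) set" where
  "mob_V n = {1..n} \<times> (UNIV :: bool set)"

definition mob_adj :: "nat \<Rightarrow> nat \<times> bool \<Rightarrow> nat \<times> bool \<Rightarrow> bool" where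
  "mob_adj n u v \<longleftrightarrow> u \<in> mob_V n \<and> v \<in> mob_V n \<and>
     ((snd u = snd v \<and> (fst v = fst u + 1 \<or> fst u = fst v + 1))
      \<or> (fst u = fst v \<and> snd u \<noteq> snd v)
      \<or> {u, v} = {(1, False), (n, True)}
      \<or> {u, v} = {(1, True), (n, False)})"

end

theory Submission
  imports Defs
begin

text \<open>Numbering the vertices i and i' as i - 1 and n + i - 1 turns M_n into the circulant
graph on Z/2nZ in which k is adjacent to k \<plusminus> 1 and k + n.  By rotation invariance it
suffices to find one function F on Z/2nZ with L F = \<delta>_0 - 1/(2n) and mean zero; then
G(w, u) = F(u - w) is a Green function, r_ij = G(i,i) + G(j,j) - G(i,j) - G(j,i), and
Kf(M_n) = (2n)^2 F(0).  Splitting F into its parts that are symmetric and antisymmetric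
under k \<mapsto> k + n reduces L F = \<delta>_0 - 1/(2n) to two equations on a path of length n:
the Green function \<alpha> of the cycle C_n, a quadratic polynomial, and an antiperiodic
solution \<beta> of \<beta>(j+1) + \<beta>(j-1) = 4\<beta>(j), a combination of p^j and q^j.\<close>

section \<open>Resistance distance via a Green function\<close>

definition harmonic :: "'a set \<Rightarrow> ('a \<Rightarrow> 'a \<Rightarrow> bool) \<Rightarrow> ('a \<Rightarrow> real) \<Rightarrow> bool" where
  "harmonic V A z \<longleftrightarrow> (\<forall>u\<in>V. laplacian_app V A z u = 0)"

lemma laplacian_app_diff:
  "laplacian_app V A (\<lambda>u. x u - y u) u = laplacian_app V A x u - laplacian_app V A y u"
  unfolding laplacian_app_def sum_subtractf[symmetric] by (rule sum.cong) auto

lemma laplacian_quadratic_form: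
  assumes fin: "finite V" and sym: "\<And>u v. A u v \<Longrightarrow> A v u"
  shows "(\<Sum>u\<in>V. z u * laplacian_app V A z u)
           = (\<Sum>u\<in>V. \<Sum>v\<in>V. if A u v then (z u - z v)^2 else 0) / 2"
proof -
  define h where "h u v = (if A u v then z u * (z u - z v) else 0)" for u v
  have lap: "(\<Sum>u\<in>V. z u * laplacian_app V A z u) = (\<Sum>u\<in>V. \<Sum>v\<in>V. h u v)"
    unfolding laplacian_app_def sum.inter_filter[OF fin] sum_distrib_left h_def
    by (intro sum.cong) auto
  have "(if A u v then (z u - z v)^2 else 0) = h u v + h v u" for u v
    using sym[of u v] sym[of v u] by (auto simp: h_def power2_eq_square algebra_simps)
  then have "(\<Sum>u\<in>V. \<Sum>v\<in>V. if A u v then (z u - z v)^2 else 0)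
               = (\<Sum>u\<in>V. \<Sum>v\<in>V. h u v) + (\<Sum>u\<in>V. \<Sum>v\<in>V. h v u)"
    by (simp add: sum.distrib)
  also have "(\<Sum>u\<in>V. \<Sum>v\<in>V. h v u) = (\<Sum>u\<in>V. \<Sum>v\<in>V. h u v)"
    by (rule sum.swap)
  finally show ?thesis using lap by simp
qed

lemma harmonic_eq_on_edge:
  assumes fin: "finite V" and sym: "\<And>u v. A u v \<Longrightarrow> A v u" and harm: "harmonic V A z"
    and u: "u \<in> V" and v: "v \<in> V" and uv: "A u v"
  shows "z u = z v"
proof -
  define e where "e u v = (if A u v then (z u - z v)^2 else 0)" for u v
  have "(\<Sum>u\<in>V. z u * laplacian_app V A z u) = (\<Sum>u\<in>V. \<Sum>v\<in>V. e u v) / 2"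
    unfolding e_def by (rule laplacian_quadratic_form[OF fin]) (erule sym)
  then have "(\<Sum>u\<in>V. \<Sum>v\<in>V. e u v) = 0"
    using harm by (simp add: harmonic_def)
  moreover have e_nonneg: "0 \<le> e u' v'" for u' v'
    by (simp add: e_def)
  ultimately have "(\<Sum>v\<in>V. e u v) = 0"
    using u by (simp add: sum_nonneg_eq_0_iff[OF fin] sum_nonneg)
  then have "e u v = 0"
    using v by (simp add: sum_nonneg_eq_0_iff[OF fin] e_nonneg)
  then show ?thesis using uv by (simp add: e_def)
qed

lemma resistance_eqI:
  assumes const: "\<And>z u v. harmonic V A z \<Longrightarrow> u \<in> V \<Longrightarrow> v \<in> V \<Longrightarrow> z u = z v"
    and i: "i \<in> V" and j: "j \<in> V"
    and x: "\<forall>u\<in>V. laplacian_app V A x u = (if u = i then 1 else 0) - (if u = j then 1 else 0)"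
  shows "resistance V A i j = x i - x j"
  unfolding resistance_def
proof (rule the_equality)
  fix r
  assume "\<exists>y. (\<forall>u\<in>V. laplacian_app V A y u = (if u = i then 1 else 0) - (if u = j then 1 else 0))
               \<and> r = y i - y j"
  then obtain y where y: "\<forall>u\<in>V. laplacian_app V A y u = (if u = i then 1 else 0) - (if u = j then 1 else 0)"
    and r: "r = y i - y j" by blast
  have "harmonic V A (\<lambda>u. y u - x u)"
    using x y by (simp add: harmonic_def laplacian_app_diff)
  then have "y i - x i = y j - x j" using const i j by blast
  then show "r = x i - x j" using r by simp
qed (use x in blast)

lemma resistance_green:
  assumes const: "\<And>z u v. harmonic V A z \<Longrightarrow> u \<in> V \<Longrightarrow> v \<in> V \<Longrightarrow> z u = z v"
    and green: "\<And>w u. w \<in> V \<Longrightarrow> u \<in> V \<Longrightarrow> laplacian_app V A (G w) u = (if u = w then 1 else 0) - c"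
    and i: "i \<in> V" and j: "j \<in> V"
  shows "resistance V A i j = G i i + G j j - G i j - G j i"
  using resistance_eqI[OF const i j, where x = "\<lambda>u. G i u - G j u"] green i j
  by (simp add: laplacian_app_diff)

lemma kirchhoff_green:
  assumes fin: "finite V"
    and const: "\<And>z u v. harmonic V A z \<Longrightarrow> u \<in> V \<Longrightarrow> v \<in> V \<Longrightarrow> z u = z v"
    and green: "\<And>w u. w \<in> V \<Longrightarrow> u \<in> V \<Longrightarrow> laplacian_app V A (G w) u = (if u = w then 1 else 0) - c"
    and centred: "\<And>w. w \<in> V \<Longrightarrow> (\<Sum>u\<in>V. G w u) = 0"
  shows "kirchhoff V A = real (card V) * (\<Sum>w\<in>V. G w w)"
proof -
  have "(\<Sum>i\<in>V. \<Sum>j\<in>V. resistance V A i j) = (\<Sum>i\<in>V. \<Sum>j\<in>V. G i i + G j j - G i j - G j i)"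
    by (intro sum.cong refl) (simp add: resistance_green[OF const green])
  also have "\<dots> = (\<Sum>i\<in>V. \<Sum>j\<in>V. G i i) + (\<Sum>i\<in>V. \<Sum>j\<in>V. G j j)
                   - (\<Sum>i\<in>V. \<Sum>j\<in>V. G i j) - (\<Sum>j\<in>V. \<Sum>i\<in>V. G j i)"
    by (simp add: sum.distrib sum_subtractf sum.swap[of "\<lambda>i j. G j i"])
  also have "\<dots> = 2 * real (card V) * (\<Sum>w\<in>V. G w w)"
    using centred by (simp add: sum_distrib_left[symmetric])
  finally show ?thesis unfolding kirchhoff_def by simp
qed

section \<open>The Moebius ladder as a circulant graph on Z/2nZ\<close>

text \<open>Residues modulo 2n are represented by 0, ..., 2n - 1; n is the number of rungs.\<close>

definition cyc_next :: "nat \<Rightarrow> nat \<Rightarrow> nat" where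
  "cyc_next n k = (if k + 1 = 2 * n then 0 else k + 1)"

definition cyc_prev :: "nat \<Rightarrow> nat \<Rightarrow> nat" where
  "cyc_prev n k = (if k = 0 then 2 * n - 1 else k - 1)"

definition cyc_opp :: "nat \<Rightarrow> nat \<Rightarrow> nat" where
  "cyc_opp n k = (if k < n then k + n else k - n)"

definition cyc_diff :: "nat \<Rightarrow> nat \<Rightarrow> nat \<Rightarrow> nat" where
  "cyc_diff n k c = (if c \<le> k then k - c else k + 2 * n - c)"

lemma cyc_next_less: "n \<ge> 1 \<Longrightarrow> k < 2 * n \<Longrightarrow> cyc_next n k < 2 * n"
  by (auto simp: cyc_next_def)

lemma cyc_prev_less: "n \<ge> 1 \<Longrightarrow> k < 2 * n \<Longrightarrow> cyc_prev n k < 2 * n"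
  by (auto simp: cyc_prev_def)

lemma cyc_opp_less: "k < 2 * n \<Longrightarrow> cyc_opp n k < 2 * n"
  by (auto simp: cyc_opp_def)

lemma cyc_diff_less: "k < 2 * n \<Longrightarrow> c < 2 * n \<Longrightarrow> cyc_diff n k c < 2 * n"
  by (auto simp: cyc_diff_def)

lemma cyc_diff_eq_0_iff: "k < 2 * n \<Longrightarrow> c < 2 * n \<Longrightarrow> cyc_diff n k c = 0 \<longleftrightarrow> k = c"
  by (auto simp: cyc_diff_def)

lemma cyc_diff_next: "k < 2 * n \<Longrightarrow> c < 2 * n \<Longrightarrow> cyc_diff n (cyc_next n k) c = cyc_next n (cyc_diff n k c)"
  by (auto simp: cyc_diff_def cyc_next_def)

lemma cyc_diff_prev: "k < 2 * n \<Longrightarrow> c < 2 * n \<Longrightarrow> cyc_diff n (cyc_prev n k) c = cyc_prev n (cyc_diff n k c)"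
  by (auto simp: cyc_diff_def cyc_prev_def)

lemma cyc_diff_opp: "k < 2 * n \<Longrightarrow> c < 2 * n \<Longrightarrow> cyc_diff n (cyc_opp n k) c = cyc_opp n (cyc_diff n k c)"
  by (auto simp: cyc_diff_def cyc_opp_def)

lemma sum_cyc_diff: "c < 2 * n \<Longrightarrow> (\<Sum>k<2 * n. f (cyc_diff n k c)) = (\<Sum>k<2 * n. f k :: real)"
  by (rule sum.reindex_bij_witness[of _ "\<lambda>e. if e + c < 2 * n then e + c else e + c - 2 * n"
        "\<lambda>k. cyc_diff n k c"]) (auto simp: cyc_diff_def)

definition mob_index :: "nat \<Rightarrow> nat \<times> bool \<Rightarrow> nat" where
  "mob_index n u = fst u - 1 + (if snd u then n else 0)"

definition mob_vertex :: "nat \<Rightarrow> nat \<Rightarrow> nat \<times> bool" where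
  "mob_vertex n k = (if k < n then (k + 1, False) else (k - n + 1, True))"

lemma finite_mob_V: "finite (mob_V n)"
  by (simp add: mob_V_def)

lemma mob_index_less: "u \<in> mob_V n \<Longrightarrow> mob_index n u < 2 * n"
  by (cases u) (auto simp: mob_V_def mob_index_def)

lemma mob_vertex_in: "k < 2 * n \<Longrightarrow> mob_vertex n k \<in> mob_V n"
  by (auto simp: mob_V_def mob_vertex_def)

lemma mob_index_vertex: "k < 2 * n \<Longrightarrow> mob_index n (mob_vertex n k) = k"
  by (auto simp: mob_vertex_def mob_index_def)

lemma mob_vertex_index: "u \<in> mob_V n \<Longrightarrow> mob_vertex n (mob_index n u) = u"
  by (cases u) (auto simp: mob_V_def mob_index_def mob_vertex_def)

lemma sum_mob_V: "(\<Sum>u\<in>mob_V n. g (mob_index n u)) = (\<Sum>k<2 * n. g k :: real)"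
  by (rule sum.reindex_bij_witness[of _ "mob_vertex n" "mob_index n"])
     (auto simp: mob_index_less mob_vertex_in mob_index_vertex mob_vertex_index)

lemma mob_adj_sym: "mob_adj n u v \<Longrightarrow> mob_adj n v u"
  unfolding mob_adj_def by (metis insert_commute)

lemma mob_adj_iff_index:
  assumes n: "n \<ge> 3" and u: "u \<in> mob_V n" and v: "v \<in> mob_V n"
  shows "mob_adj n u v \<longleftrightarrow> mob_index n v \<in> {cyc_next n (mob_index n u), cyc_prev n (mob_index n u),
                                               cyc_opp n (mob_index n u)}"
proof -
  obtain i b j c where uv: "u = (i, b)" "v = (j, c)" by fastforce
  have "1 \<le> i" "i \<le> n" "1 \<le> j" "j \<le> n" using u v uv by (auto simp: mob_V_def)
  then show ?thesis using n u v unfolding uv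
    by (cases b; cases c)
       (auto simp: mob_adj_def mob_index_def cyc_next_def cyc_prev_def cyc_opp_def doubleton_eq_iff)
qed

lemma mob_neighbours:
  assumes n: "n \<ge> 3" and u: "u \<in> mob_V n"
  shows "{v \<in> mob_V n. mob_adj n u v} = mob_vertex n ` {cyc_next n (mob_index n u),
           cyc_prev n (mob_index n u), cyc_opp n (mob_index n u)}" (is "_ = mob_vertex n ` ?N")
proof (intro set_eqI iffI)
  fix v assume "v \<in> {v \<in> mob_V n. mob_adj n u v}"
  then have v: "v \<in> mob_V n" and "mob_index n v \<in> ?N"
    using mob_adj_iff_index[OF n u] by blast+
  then show "v \<in> mob_vertex n ` ?N" using mob_vertex_index[OF v] by (metis image_eqI)
next
  fix v assume "v \<in> mob_vertex n ` ?N"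
  then obtain m where m: "m \<in> ?N" and v: "v = mob_vertex n m" by blast
  have "m < 2 * n"
    using m n mob_index_less[OF u] by (auto simp: cyc_next_less cyc_prev_less cyc_opp_less)
  then have "v \<in> mob_V n" "mob_index n v = m" using v by (simp_all add: mob_vertex_in mob_index_vertex)
  then show "v \<in> {v \<in> mob_V n. mob_adj n u v}" using mob_adj_iff_index[OF n u] m by auto
qed

lemma mob_laplacian_app:
  assumes n: "n \<ge> 3" and u: "u \<in> mob_V n"
  shows "laplacian_app (mob_V n) (mob_adj n) x u =
    3 * x u - x (mob_vertex n (cyc_next n (mob_index n u))) - x (mob_vertex n (cyc_prev n (mob_index n u)))
      - x (mob_vertex n (cyc_opp n (mob_index n u)))"
proof -
  define k where "k = mob_index n u"
  have k: "k < 2 * n" using mob_index_less[OF u] k_def by simp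
  have "cyc_next n k < 2 * n" "cyc_prev n k < 2 * n" "cyc_opp n k < 2 * n"
    using n k by (simp_all add: cyc_next_less cyc_prev_less cyc_opp_less)
  then have "inj_on (mob_vertex n) {cyc_next n k, cyc_prev n k, cyc_opp n k}"
    by (intro inj_on_inverseI[of _ "mob_index n"]) (auto simp: mob_index_vertex)
  moreover have "cyc_next n k \<noteq> cyc_prev n k" "cyc_next n k \<noteq> cyc_opp n k" "cyc_prev n k \<noteq> cyc_opp n k"
    using n k by (auto simp: cyc_next_def cyc_prev_def cyc_opp_def)
  ultimately show ?thesis
    unfolding laplacian_app_def mob_neighbours[OF n u] k_def[symmetric] by (simp add: sum.reindex)
qed

lemma mob_harmonic_const:
  assumes n: "n \<ge> 3" and harm: "harmonic (mob_V n) (mob_adj n) z"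
    and u: "u \<in> mob_V n" and v: "v \<in> mob_V n"
  shows "z u = z v"
proof -
  have step: "z (mob_vertex n (Suc k)) = z (mob_vertex n k)" if "Suc k < 2 * n" for k
  proof (rule harmonic_eq_on_edge[OF _ mob_adj_sym harm])
    show "mob_adj n (mob_vertex n (Suc k)) (mob_vertex n k)"
      using that n mob_vertex_in[of k n] mob_vertex_in[of "Suc k" n]
      by (simp add: mob_adj_iff_index mob_index_vertex cyc_prev_def)
  qed (use that in \<open>simp_all add: finite_mob_V mob_vertex_in\<close>)
  have "k < 2 * n \<Longrightarrow> z (mob_vertex n k) = z (mob_vertex n 0)" for k
    by (induction k) (simp_all add: step)
  then show ?thesis
    using mob_vertex_index[OF u] mob_vertex_index[OF v] mob_index_less[OF u] mob_index_less[OF v] by metis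
qed

section \<open>The Green function of the Moebius ladder\<close>

definition mob_p :: real where
  "mob_p = 2 + sqrt 3"

definition mob_q :: real where
  "mob_q = 2 - sqrt 3"

lemma mob_p_gt_0: "mob_p > 0"
  by (simp add: mob_p_def add_pos_nonneg)

lemma mob_pq_power: "mob_p ^ j * mob_q ^ j = 1"
proof -
  have "mob_p * mob_q = 1" by (simp add: mob_p_def mob_q_def algebra_simps)
  then show ?thesis by (metis power_mult_distrib power_one)
qed

definition cycle_green :: "nat \<Rightarrow> nat \<Rightarrow> real" where
  "cycle_green n j = (real n ^ 2 - 1) / (12 * real n) - real j * (real n - real j) / (2 * real n)"

text \<open>Since p q = 1, the numerator changes sign under j \<mapsto> n - j; the denominator
normalises the jump 2\<beta>(0) - \<beta>(1) at the source to 1/2.\<close>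

definition antiperiodic_green :: "nat \<Rightarrow> nat \<Rightarrow> real" where
  "antiperiodic_green n j = (mob_p ^ n * mob_q ^ j - mob_p ^ j) / (2 * sqrt 3 * (1 + mob_p ^ n))"

lemma cycle_green_step:
  "1 \<le> j \<Longrightarrow> cycle_green n (j + 1) + cycle_green n (j - 1) = 2 * cycle_green n j + 1 / real n"
  by (cases "n = 0") (simp_all add: cycle_green_def field_simps)

lemma cycle_green_reflect: "j \<le> n \<Longrightarrow> cycle_green n (n - j) = cycle_green n j"
  by (simp add: cycle_green_def algebra_simps)

lemma cycle_green_jump: "n \<ge> 1 \<Longrightarrow> cycle_green n 0 - cycle_green n 1 = 1 / 2 - 1 / (2 * real n)"
  by (simp add: cycle_green_def field_simps)

lemma antiperiodic_green_step:
  assumes "1 \<le> j"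
  shows "antiperiodic_green n (j + 1) + antiperiodic_green n (j - 1) = 4 * antiperiodic_green n j"
proof -
  obtain k where k: "j = Suc k" using assms by (cases j) auto
  have root_power: "x ^ (k + 2) + x ^ k = 4 * x ^ (k + 1)" if "x * x + 1 = 4 * x" for x :: real
  proof -
    have "x ^ (k + 2) + x ^ k = x ^ k * (x * x + 1)" by (simp add: power_add algebra_simps)
    then show ?thesis using that by simp
  qed
  define P D where "P = mob_p ^ n" and "D = 2 * sqrt 3 * (1 + mob_p ^ n)"
  have "mob_p * mob_p + 1 = 4 * mob_p" "mob_q * mob_q + 1 = 4 * mob_q"
    by (simp_all add: mob_p_def mob_q_def algebra_simps)
  note roots = this[THEN root_power]
  have "(P * mob_q ^ (k + 2) - mob_p ^ (k + 2)) + (P * mob_q ^ k - mob_p ^ k)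
          = P * (mob_q ^ (k + 2) + mob_q ^ k) - (mob_p ^ (k + 2) + mob_p ^ k)"
    by (simp add: algebra_simps)
  also have "\<dots> = 4 * (P * mob_q ^ (k + 1) - mob_p ^ (k + 1))"
    unfolding roots by (simp add: algebra_simps)
  finally have "(P * mob_q ^ (k + 2) - mob_p ^ (k + 2)) / D + (P * mob_q ^ k - mob_p ^ k) / D
               = 4 * ((P * mob_q ^ (k + 1) - mob_p ^ (k + 1)) / D)"
    by (simp add: add_divide_distrib[symmetric])
  then show ?thesis by (simp add: antiperiodic_green_def k P_def D_def)
qed

lemma antiperiodic_green_reflect:
  assumes "j \<le> n"
  shows "antiperiodic_green n (n - j) = - antiperiodic_green n j"
proof -
  have "mob_p ^ n * mob_q ^ j = mob_p ^ (n - j)" "mob_p ^ n * mob_q ^ (n - j) = mob_p ^ j"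
    using mob_pq_power[of j] mob_pq_power[of "n - j"] assms
    by (metis le_add_diff_inverse mult.assoc mult.commute mult.right_neutral power_add)+
  then show ?thesis by (simp add: antiperiodic_green_def minus_divide_left)
qed

lemma antiperiodic_green_jump: "2 * antiperiodic_green n 0 - antiperiodic_green n 1 = 1 / 2"
proof -
  define D where "D = 2 * sqrt 3 * (1 + mob_p ^ n)"
  have "D > 0" using mob_p_gt_0 by (simp add: D_def add_pos_pos)
  have "2 * antiperiodic_green n 0 - antiperiodic_green n 1
          = (2 * (mob_p ^ n - 1) - (mob_p ^ n * mob_q - mob_p)) / D"
    by (simp add: antiperiodic_green_def D_def diff_divide_distrib)
  also have "2 * (mob_p ^ n - 1) - (mob_p ^ n * mob_q - mob_p) = D / 2"
    by (simp add: D_def mob_p_def mob_q_def algebra_simps)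
  finally show ?thesis using \<open>D > 0\<close> by simp
qed

definition mob_green_index :: "nat \<Rightarrow> nat \<Rightarrow> real" where
  "mob_green_index n m =
     (if m < n then (cycle_green n m + antiperiodic_green n m) / 2
      else (cycle_green n (m - n) - antiperiodic_green n (m - n)) / 2)"

lemma mob_green_index_low:
  "j \<le> n \<Longrightarrow> mob_green_index n j = (cycle_green n j + antiperiodic_green n j) / 2"
  using cycle_green_reflect[of 0 n] antiperiodic_green_reflect[of 0 n]
  by (auto simp: mob_green_index_def)

lemma mob_green_index_opp:
  "j \<le> n \<Longrightarrow> mob_green_index n (cyc_opp n j) = (cycle_green n j - antiperiodic_green n j) / 2"
  using cycle_green_reflect[of 0 n] antiperiodic_green_reflect[of 0 n]
  by (auto simp: mob_green_index_def cyc_opp_def)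

lemma mob_green_index_equation_interior:
  assumes d: "0 < d" "d < 2 * n" "d \<noteq> n"
  shows "3 * mob_green_index n d - mob_green_index n (cyc_next n d) - mob_green_index n (cyc_prev n d)
           - mob_green_index n (cyc_opp n d) = - 1 / (2 * real n)"
proof -
  let ?F = "mob_green_index n" and ?\<alpha> = "cycle_green n" and ?\<beta> = "antiperiodic_green n"
  have steps: "?\<alpha> (j + 1) + ?\<alpha> (j - 1) = 2 * ?\<alpha> j + 2 * (1 / (2 * real n))"
    "?\<beta> (j + 1) + ?\<beta> (j - 1) = 4 * ?\<beta> j" if "1 \<le> j" for j
    using that cycle_green_step antiperiodic_green_step by simp_all
  note F_low = mob_green_index_low and F_opp = mob_green_index_opp
  show ?thesis
  proof (cases "d < n")
    case True
    have "cyc_next n d = d + 1" "cyc_prev n d = d - 1" using d True by (auto simp: cyc_next_def cyc_prev_def)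
    then have "?F d = (?\<alpha> d + ?\<beta> d) / 2" "?F (cyc_next n d) = (?\<alpha> (d + 1) + ?\<beta> (d + 1)) / 2"
      "?F (cyc_prev n d) = (?\<alpha> (d - 1) + ?\<beta> (d - 1)) / 2" "?F (cyc_opp n d) = (?\<alpha> d - ?\<beta> d) / 2"
      using True by (simp_all add: F_low F_opp)
    then show ?thesis using d steps[of d] by simp
  next
    case False
    define j where "j = d - n"
    have j: "0 < j" "j < n" using d False by (simp_all add: j_def)
    have "d = cyc_opp n j" "cyc_next n d = cyc_opp n (j + 1)" "cyc_prev n d = cyc_opp n (j - 1)"
      "cyc_opp n d = j"
      using d False by (auto simp: j_def cyc_next_def cyc_prev_def cyc_opp_def)
    then have "?F d = (?\<alpha> j - ?\<beta> j) / 2" "?F (cyc_next n d) = (?\<alpha> (j + 1) - ?\<beta> (j + 1)) / 2"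
      "?F (cyc_prev n d) = (?\<alpha> (j - 1) - ?\<beta> (j - 1)) / 2" "?F (cyc_opp n d) = (?\<alpha> j + ?\<beta> j) / 2"
      using j by (simp_all add: F_low F_opp)
    then show ?thesis using j steps[of j] by simp
  qed
qed

lemma mob_green_index_equation:
  assumes n: "n \<ge> 3" and d: "d < 2 * n"
  shows "3 * mob_green_index n d - mob_green_index n (cyc_next n d) - mob_green_index n (cyc_prev n d)
           - mob_green_index n (cyc_opp n d) = (if d = 0 then 1 else 0) - 1 / (2 * real n)"
proof -
  let ?F = "mob_green_index n" and ?\<alpha> = "cycle_green n" and ?\<beta> = "antiperiodic_green n"
  have reflect: "?\<alpha> (n - 1) = ?\<alpha> 1" "?\<beta> (n - 1) = - ?\<beta> 1" "?\<alpha> n = ?\<alpha> 0" "?\<beta> n = - ?\<beta> 0"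
    using n cycle_green_reflect[of 1 n] antiperiodic_green_reflect[of 1 n]
      cycle_green_reflect[of 0 n] antiperiodic_green_reflect[of 0 n] by simp_all
  have jumps: "?\<alpha> 0 - ?\<alpha> 1 = 1 / 2 - 1 / (2 * real n)" "2 * ?\<beta> 0 - ?\<beta> 1 = 1 / 2"
    using n cycle_green_jump antiperiodic_green_jump by simp_all
  note F_low = mob_green_index_low and F_opp = mob_green_index_opp
  consider "d = 0" | "d = n" | "0 < d" "d \<noteq> n" by linarith
  then show ?thesis
  proof cases
    case 1
    have "cyc_next n d = 1" "cyc_prev n d = cyc_opp n (n - 1)" "cyc_opp n d = cyc_opp n 0"
      using 1 n by (auto simp: cyc_next_def cyc_prev_def cyc_opp_def)
    then have "?F d = (?\<alpha> 0 + ?\<beta> 0) / 2" "?F (cyc_next n d) = (?\<alpha> 1 + ?\<beta> 1) / 2"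
      "?F (cyc_prev n d) = (?\<alpha> 1 + ?\<beta> 1) / 2" "?F (cyc_opp n d) = (?\<alpha> 0 - ?\<beta> 0) / 2"
      using 1 n reflect F_opp[of "n - 1" n] by (simp_all add: F_low F_opp)
    then show ?thesis using 1 jumps by simp
  next
    case 2
    have "d = cyc_opp n 0" "cyc_next n d = cyc_opp n 1" "cyc_prev n d = n - 1" "cyc_opp n d = 0"
      using 2 n by (auto simp: cyc_next_def cyc_prev_def cyc_opp_def)
    then have "?F d = (?\<alpha> 0 - ?\<beta> 0) / 2" "?F (cyc_next n d) = (?\<alpha> 1 - ?\<beta> 1) / 2"
      "?F (cyc_prev n d) = (?\<alpha> 1 - ?\<beta> 1) / 2" "?F (cyc_opp n d) = (?\<alpha> 0 + ?\<beta> 0) / 2"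
      using 2 n reflect by (simp_all add: F_low F_opp)
    then show ?thesis using 2 n jumps by simp
  next
    case 3
    then show ?thesis using mob_green_index_equation_interior d by simp
  qed
qed

lemma sum_lessThan_add: "(\<Sum>m<a + b :: nat. f m) = (\<Sum>m<a. f m) + (\<Sum>m<b. f (a + m) :: real)"
  by (induction b) (simp_all add: algebra_simps)

lemma sum_cycle_green: "n \<ge> 1 \<Longrightarrow> (\<Sum>j<n. cycle_green n j) = 0"
proof -
  assume n: "n \<ge> 1"
  have sq: "(\<Sum>j<m. real j * (real n - real j)) = real m * (real m - 1) * (3 * real n - 2 * real m + 1) / 6"
    for m by (induction m) (simp_all add: field_simps)
  have "(\<Sum>j<n. cycle_green n j)
          = real n * ((real n ^ 2 - 1) / (12 * real n)) - (\<Sum>j<n. real j * (real n - real j)) / (2 * real n)"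
    by (simp add: cycle_green_def sum_subtractf sum_divide_distrib)
  also have "\<dots> = 0" using n unfolding sq by (simp add: field_simps power2_eq_square)
  finally show ?thesis .
qed

lemma sum_mob_green_index:
  assumes "n \<ge> 1"
  shows "(\<Sum>m<2 * n. mob_green_index n m) = 0"
proof -
  have "(\<Sum>m<2 * n. mob_green_index n m) = (\<Sum>m<n. mob_green_index n m + mob_green_index n (n + m))"
    unfolding mult_2 sum_lessThan_add sum.distrib ..
  also have "\<dots> = (\<Sum>m<n. cycle_green n m)"
    by (intro sum.cong refl) (simp add: mob_green_index_def field_simps)
  finally show ?thesis using sum_cycle_green[OF assms] by simp
qed

definition mob_green :: "nat \<Rightarrow> nat \<times> bool \<Rightarrow> nat \<times> bool \<Rightarrow> real" where
  "mob_green n w u = mob_green_index n (cyc_diff n (mob_index n u) (mob_index n w))"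

lemma mob_green_laplacian:
  assumes n: "n \<ge> 3" and w: "w \<in> mob_V n" and u: "u \<in> mob_V n"
  shows "laplacian_app (mob_V n) (mob_adj n) (mob_green n w) u = (if u = w then 1 else 0) - 1 / (2 * real n)"
proof -
  define k c where "k = mob_index n u" and "c = mob_index n w"
  have k: "k < 2 * n" and c: "c < 2 * n" using mob_index_less u w by (simp_all add: k_def c_def)
  have at_vertex: "mob_green n w (mob_vertex n m) = mob_green_index n (cyc_diff n m c)" if "m < 2 * n" for m
    using that by (simp add: mob_green_def mob_index_vertex c_def)
  have "laplacian_app (mob_V n) (mob_adj n) (mob_green n w) u
          = 3 * mob_green_index n (cyc_diff n k c) - mob_green_index n (cyc_next n (cyc_diff n k c))
            - mob_green_index n (cyc_prev n (cyc_diff n k c)) - mob_green_index n (cyc_opp n (cyc_diff n k c))"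
  proof -
    have "cyc_next n k < 2 * n" "cyc_prev n k < 2 * n" "cyc_opp n k < 2 * n"
      using n k by (simp_all add: cyc_next_less cyc_prev_less cyc_opp_less)
    then show ?thesis
      unfolding mob_laplacian_app[OF n u] k_def[symmetric]
      by (simp add: at_vertex cyc_diff_next[OF k c] cyc_diff_prev[OF k c] cyc_diff_opp[OF k c]
          mob_green_def mob_index_vertex flip: k_def c_def)
  qed
  also have "\<dots> = (if cyc_diff n k c = 0 then 1 else 0) - 1 / (2 * real n)"
    by (rule mob_green_index_equation[OF n cyc_diff_less[OF k c]])
  also have "cyc_diff n k c = 0 \<longleftrightarrow> u = w"
    using cyc_diff_eq_0_iff[OF k c] mob_vertex_index[OF u] mob_vertex_index[OF w] k_def c_def by metis
  finally show ?thesis .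
qed

lemma mob_green_centred: "n \<ge> 1 \<Longrightarrow> w \<in> mob_V n \<Longrightarrow> (\<Sum>u\<in>mob_V n. mob_green n w u) = 0"
  unfolding mob_green_def
  by (simp add: sum_mob_V[where g = "\<lambda>k. mob_green_index n (cyc_diff n k (mob_index n w))"]
      sum_cyc_diff mob_index_less sum_mob_green_index)

lemma mob_green_diag: "mob_green n w w = mob_green_index n 0"
  by (simp add: mob_green_def cyc_diff_def)

lemma mob_green_index_0:
  assumes n: "n \<ge> 1"
  shows "4 * real n ^ 2 * mob_green_index n 0 = (real n ^ 3 - real n) / 6
           + (real n ^ 2 / sqrt 3) * ((mob_p ^ n - mob_q ^ n) / (mob_p ^ n + mob_q ^ n + 2))"
proof -
  define P where "P = mob_p ^ n"
  have P: "P > 0" using mob_p_gt_0 by (simp add: P_def)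
  have "P * mob_q ^ n = 1" using mob_pq_power[of n] by (simp add: P_def)
  then have Q: "mob_q ^ n = 1 / P" using P by (simp add: field_simps)
  have "P - 1 / P = (P - 1) * (P + 1) / P" "P + 1 / P + 2 = (P + 1) * (P + 1) / P"
    using P by (simp_all add: field_simps algebra_simps)
  moreover have "P + 1 \<noteq> 0" using P by simp
  ultimately have "(P - 1 / P) / (P + 1 / P + 2) = (P - 1) / (P + 1)"
    using P by simp
  then have ratio: "(P - 1) / (P + 1) = (mob_p ^ n - mob_q ^ n) / (mob_p ^ n + mob_q ^ n + 2)"
    unfolding Q P_def by simp
  have "4 * real n ^ 2 * mob_green_index n 0
      = 2 * real n ^ 2 * ((real n ^ 2 - 1) / (12 * real n)) + 2 * real n ^ 2 * ((P - 1) / (2 * sqrt 3 * (1 + P)))"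
    using n by (simp add: mob_green_index_def cycle_green_def antiperiodic_green_def P_def algebra_simps)
  also have "2 * real n ^ 2 * ((real n ^ 2 - 1) / (12 * real n)) = (real n ^ 3 - real n) / 6"
    using n by (simp add: field_simps power2_eq_square power3_eq_cube)
  also have "2 * real n ^ 2 * ((P - 1) / (2 * sqrt 3 * (1 + P))) = (real n ^ 2 / sqrt 3) * ((P - 1) / (P + 1))"
    by (simp add: add.commute)
  finally show ?thesis unfolding ratio .
qed

theorem theorem3p3:
  fixes n :: nat
  assumes "n \<ge> 3"
  shows "kirchhoff (mob_V n) (mob_adj n) =
           (real n ^ 3 - real n) / 6
           + (real n ^ 2 / sqrt 3) *
             (((2 + sqrt 3) ^ n - (2 - sqrt 3) ^ n) / ((2 + sqrt 3) ^ n + (2 - sqrt 3) ^ n + 2))"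
proof -
  have "kirchhoff (mob_V n) (mob_adj n) = real (card (mob_V n)) * (\<Sum>w\<in>mob_V n. mob_green n w w)"
    using assms by (intro kirchhoff_green[OF finite_mob_V mob_harmonic_const mob_green_laplacian
        mob_green_centred]) simp_all
  also have "\<dots> = 4 * real n ^ 2 * mob_green_index n 0"
    by (simp add: mob_green_diag mob_V_def card_cartesian_product power2_eq_square)
  finally show ?thesis
    using mob_green_index_0 assms by (simp add: mob_p_def mob_q_def)
qed

end
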